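(* Let $S$ be a semigroup and $\emptyset\neq E\subseteq E(S)$. Then the partial operation $\circ$ on $C_E(S)$ is well defined (i.e. if $(e,s),(f,t)\in C_E(S)$ and $sf=s$ then $(e,st)\in C_E(S)$), and $P=(C_E(S),\circ,D)$ is a constellation whose set of right identities is $D(P)=\{(e,e)\mid e\in E\}$. Moreover, for $(e,s),(f,t)\in C_E(S)$, $(e,s)\le(f,t)$ in the natural quasiorder of $P$ if and only if $ef=e$ and $s=et$. If in addition $S$ is an $E$-demigroup, then $C^d_E(S)$ is a subconstellation of $C_E(S)$.
   Context: For a semigroup $S$, $E(S)$ denotes its set of idempotents. For $\emptyset\neq E\subseteq E(S)$, $C_E(S)=\{(e,s)\in E\times S\mid es=s\}$, with partial binary operation $(e,s)\circ(f,t)=(e,st)$, defined exactly when $sf=s$, and unary operation $D((e,s))=(e,e)$. A demigroup is a semigroup $S$ with a unary operation $d$ such that for all $x,y\in S$: $d(x)\in E(S)$, $d(x)x=x$ and $d(xy)=d(xd(y))$. For $E\subseteq E(S)$, a demigroup $S$ is an $E$-demigroup if $d(s)\in E$ for all $s\in S$ and $ed(e)=e$ for all $e\in E$. For an $E$-demigroup, $C^d_E(S)=\{(e,s)\in C_E(S)\mid d(e)=d(s)\}$ with the restricted operations. A constellation is a set $P$ with a partial binary operation $\circ$ and a unary operation $D$ such that for all $x,y,z\in P$: (C1) if $x\circ(y\circ z)$ exists then so does $(x\circ y)\circ z$, and they are equal; (C2) if $x\circ y$ and $y\circ z$ exist then $x\circ(y\circ z)$ exists; (C3) $D(x)$ is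 the unique right identity $e$ with $e\circ x=x$, where $e$ is a right identity if $a\circ e=a$ whenever $a\circ e$ exists. $D(P)=\{D(x)\mid x\in P\}$. The natural quasiorder on $P$ is: $s\le t$ iff $D(s)\circ t$ exists and equals $s$. A subset $Q\subseteq P$ is a subconstellation if $D(s)\in Q$ for all $s\in Q$, and $s\circ t\in Q$ whenever $s,t\in Q$ and $s\circ t$ exists in $P$. *)

theory Defs
  imports Main
begin

text \<open>A semigroup S is modelled as a type of class semigroup_mult (S = UNIV).\<close>

definition idempotents :: "'a::semigroup_mult set" where
  "idempotents = {e. e * e = e}"

text \<open>Constellations: carrier P, partial binary operation (None = undefined), unary D.\<close>

definition right_identity :: "'a set \<Rightarrow> ('a \<Rightarrow> 'a \<Rightarrow> 'a option) \<Rightarrow> 'a \<Rightarrow> bool" where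
  "right_identity P cmp e \<longleftrightarrow> e \<in> P \<and>
     (\<forall>a\<in>P. cmp a e \<noteq> None \<longrightarrow> cmp a e = Some a)"

definition constellation :: "'a set \<Rightarrow> ('a \<Rightarrow> 'a \<Rightarrow> 'a option) \<Rightarrow> ('a \<Rightarrow> 'a) \<Rightarrow> bool" where
  "constellation P cmp D \<longleftrightarrow>
     (\<forall>x\<in>P. \<forall>y\<in>P. \<forall>z. cmp x y = Some z \<longrightarrow> z \<in> P) \<and>
     (\<forall>x\<in>P. D x \<in> P) \<and>
     \<comment> \<open>(C1)\<close>
     (\<forall>x\<in>P. \<forall>y\<in>P. \<forall>z\<in>P.
        (\<exists>yz. cmp y z = Some yz \<and> cmp x yz \<noteq> None) \<longrightarrow>
        (\<exists>xy yz. cmp x y = Some xy \<and> cmp y z = Some yz \<and> cmp xy z = cmp x yz)) \<and>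
     \<comment> \<open>(C2)\<close>
     (\<forall>x\<in>P. \<forall>y\<in>P. \<forall>z\<in>P.
        cmp x y \<noteq> None \<and> cmp y z \<noteq> None \<longrightarrow>
        (\<exists>yz. cmp y z = Some yz \<and> cmp x yz \<noteq> None)) \<and>
     \<comment> \<open>(C3)\<close>
     (\<forall>x\<in>P. right_identity P cmp (D x) \<and> cmp (D x) x = Some x \<and>
        (\<forall>e. right_identity P cmp e \<and> cmp e x = Some x \<longrightarrow> e = D x))"

definition natural_quasiorder ::
  "('a \<Rightarrow> 'a \<Rightarrow> 'a option) \<Rightarrow> ('a \<Rightarrow> 'a) \<Rightarrow> 'a \<Rightarrow> 'a \<Rightarrow> bool" where
  "natural_quasiorder cmp D s t \<longleftrightarrow> cmp (D s) t = Some s"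

definition subconstellation ::
  "'a set \<Rightarrow> 'a set \<Rightarrow> ('a \<Rightarrow> 'a \<Rightarrow> 'a option) \<Rightarrow> ('a \<Rightarrow> 'a) \<Rightarrow> bool" where
  "subconstellation Q P cmp D \<longleftrightarrow> Q \<subseteq> P \<and> (\<forall>s\<in>Q. D s \<in> Q) \<and>
     (\<forall>s\<in>Q. \<forall>t\<in>Q. \<forall>u. cmp s t = Some u \<longrightarrow> u \<in> Q)"

definition CE :: "'a::semigroup_mult set \<Rightarrow> ('a \<times> 'a) set" where
  "CE E = {(e, s). e \<in> E \<and> e * s = s}"

definition CE_comp :: "('a::semigroup_mult \<times> 'a) \<Rightarrow> ('a \<times> 'a) \<Rightarrow> ('a \<times> 'a) option" where
  "CE_comp x y = (if snd x * fst y = snd x then Some (fst x, snd x * snd y) else None)"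

definition CE_D :: "('a \<times> 'a) \<Rightarrow> ('a \<times> 'a)" where
  "CE_D x = (fst x, fst x)"

definition demigroup :: "('a::semigroup_mult \<Rightarrow> 'a) \<Rightarrow> bool" where
  "demigroup d \<longleftrightarrow> (\<forall>x y. d x \<in> idempotents \<and> d x * x = x \<and> d (x * y) = d (x * d y))"

definition E_demigroup :: "'a::semigroup_mult set \<Rightarrow> ('a \<Rightarrow> 'a) \<Rightarrow> bool" where
  "E_demigroup E d \<longleftrightarrow> E \<subseteq> idempotents \<and> demigroup d \<and>
     (\<forall>s. d s \<in> E) \<and> (\<forall>e\<in>E. e * d e = e)"

definition CdE :: "'a::semigroup_mult set \<Rightarrow> ('a \<Rightarrow> 'a) \<Rightarrow> ('a \<times> 'a) set" where
  "CdE E d = {(e, s) \<in> CE E. d e = d s}"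

end

(*
  Composition in C_E(S) is just multiplication in the second coordinate, guarded by the
  condition s f = s, so (C1) and (C2) reduce to associativity of S. An element (f, s) has the
  left identity (f, f); hence it is a right identity exactly when it equals (f, f), and
  D(f, s) = (f, f) is the unique right identity acting on it. For C^d_E(S) the only point is
  d(s t) = d(s d t) = d(s d f) = d(s f) = d s whenever d f = d t and s f = s.
*)
theory Submission
  imports Defs
begin

lemma CE_comp_Pair:
  "CE_comp (e, s) (f, t) = (if s * f = s then Some (e, s * t) else None)"
  by (simp add: CE_comp_def)

lemma CE_D_Pair [simp]: "CE_D (e, s) = (e, e)"
  by (simp add: CE_D_def)

lemma CE_mult_right: "(e, s) \<in> CE E \<Longrightarrow> (e, s * t) \<in> CE E"
  by (simp add: CE_def mult.assoc[symmetric])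

lemma CE_D_in_CE: "E \<subseteq> idempotents \<Longrightarrow> x \<in> CE E \<Longrightarrow> CE_D x \<in> CE E"
  by (cases x) (auto simp: CE_def idempotents_def)

lemma CE_comp_closed: "x \<in> CE E \<Longrightarrow> CE_comp x y = Some z \<Longrightarrow> z \<in> CE E"
  by (cases x; cases y) (auto simp: CE_comp_Pair CE_mult_right split: if_splits)

lemma CE_comp_assoc:
  fixes x y z :: "'a::semigroup_mult \<times> 'a"
  assumes "CE_comp y z = Some yz" and "CE_comp x yz \<noteq> None"
  shows "\<exists>xy. CE_comp x y = Some xy \<and> CE_comp xy z = CE_comp x yz"
proof -
  obtain e s f t g u where xyz: "x = (e, s)" "y = (f, t)" "z = (g, u)"
    by (cases x, cases y, cases z) blast
  show ?thesis
    using assms xyz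
    by (auto simp: CE_comp_Pair mult.assoc split: if_splits)
qed

lemma CE_comp_chain:
  fixes x y z :: "'a::semigroup_mult \<times> 'a"
  assumes "CE_comp x y \<noteq> None" and "CE_comp y z = Some yz"
  shows "CE_comp x yz \<noteq> None"
proof -
  obtain e s f t g u where xyz: "x = (e, s)" "y = (f, t)" "z = (g, u)"
    by (cases x, cases y, cases z) blast
  have "yz = (f, t * u)" and "s * f = s"
    using assms xyz
    by (simp_all add: CE_comp_Pair split: if_splits)
  then show ?thesis
    using xyz by (simp add: CE_comp_Pair)
qed

lemma CE_D_comp: "E \<subseteq> idempotents \<Longrightarrow> x \<in> CE E \<Longrightarrow> CE_comp (CE_D x) x = Some x"
  by (cases x) (auto simp: CE_def CE_comp_Pair idempotents_def)

lemma right_identity_CE_iff: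
  assumes "E \<subseteq> idempotents" and "x \<in> CE E"
  shows "right_identity (CE E) CE_comp x \<longleftrightarrow> fst x = snd x"
proof
  assume "right_identity (CE E) CE_comp x"
  moreover have "CE_D x \<in> CE E"
    using assms by (rule CE_D_in_CE)
  moreover have "CE_comp (CE_D x) x = Some x"
    using assms by (rule CE_D_comp)
  ultimately have "x = CE_D x"
    by (auto simp: right_identity_def)
  then show "fst x = snd x"
    by (cases x) simp
next
  assume "fst x = snd x"
  then show "right_identity (CE E) CE_comp x"
    using assms(2) by (cases x) (auto simp: right_identity_def CE_comp_Pair split: if_splits)
qed

lemma constellation_CE:
  assumes "E \<subseteq> idempotents"
  shows "constellation (CE E) CE_comp CE_D"
  unfolding constellation_def
proof (intro conjI ballI allI impI)
  fix x y z
  show "x \<in> CE E \<Longrightarrow> CE_comp x y = Some z \<Longrightarrow> z \<in> CE E"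
    by (rule CE_comp_closed)
  show "\<exists>yz. CE_comp y z = Some yz \<and> CE_comp x yz \<noteq> None"
    if "CE_comp x y \<noteq> None \<and> CE_comp y z \<noteq> None"
    using that CE_comp_chain by blast
  show "\<exists>xy yz. CE_comp x y = Some xy \<and> CE_comp y z = Some yz \<and> CE_comp xy z = CE_comp x yz"
    if "\<exists>yz. CE_comp y z = Some yz \<and> CE_comp x yz \<noteq> None"
    using that CE_comp_assoc by blast
next
  fix x assume x: "x \<in> CE E"
  then show "CE_D x \<in> CE E" and "CE_comp (CE_D x) x = Some x"
    using assms by (simp_all add: CE_D_in_CE CE_D_comp)
  show "right_identity (CE E) CE_comp (CE_D x)"
    using right_identity_CE_iff [OF assms CE_D_in_CE [OF assms x]] by (cases x) simp
  fix e assume e: "right_identity (CE E) CE_comp e \<and> CE_comp e x = Some x"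
  moreover have "e \<in> CE E"
    using e by (simp add: right_identity_def)
  ultimately have "fst e = snd e"
    using right_identity_CE_iff [OF assms] by blast
  with e show "e = CE_D x"
    by (cases e, cases x) (auto simp: CE_comp_Pair split: if_splits)
qed

lemma CE_D_image: "E \<subseteq> idempotents \<Longrightarrow> CE_D ` CE E = {(e, e) | e. e \<in> E}"
  by (force simp: CE_def idempotents_def)

lemma right_identities_CE:
  "E \<subseteq> idempotents \<Longrightarrow> {x \<in> CE E. right_identity (CE E) CE_comp x} = {(e, e) | e. e \<in> E}"
proof -
  assume E: "E \<subseteq> idempotents"
  have "{x \<in> CE E. right_identity (CE E) CE_comp x} = {x \<in> CE E. fst x = snd x}"
    using right_identity_CE_iff [OF E] by (auto cong: conj_cong)
  also have "\<dots> = {(e, e) | e. e \<in> E}"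
    using E by (auto simp: CE_def idempotents_def)
  finally show ?thesis .
qed

lemma natural_quasiorder_CE_iff:
  "natural_quasiorder CE_comp CE_D (e, s) (f, t) \<longleftrightarrow> e * f = e \<and> s = e * t"
  by (auto simp: natural_quasiorder_def CE_comp_Pair)

lemma demigroup_d_mult_cong:
  assumes "demigroup d" and "d f = d t"
  shows "d (s * t) = d (s * f)"
proof -
  have d_mult: "\<And>x y. d (x * y) = d (x * d y)"
    using assms(1) by (simp add: demigroup_def)
  have "d (s * t) = d (s * d t)"
    by (rule d_mult)
  also have "\<dots> = d (s * d f)"
    using assms(2) by simp
  also have "\<dots> = d (s * f)"
    by (rule d_mult [symmetric])
  finally show ?thesis .
qed

lemma CdE_subconstellation:
  assumes "E_demigroup E d"
  shows "subconstellation (CdE E d) (CE E) CE_comp CE_D"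
  unfolding subconstellation_def
proof (intro conjI ballI allI impI)
  show "CdE E d \<subseteq> CE E"
    by (auto simp: CdE_def)
  have E: "E \<subseteq> idempotents" and dm: "demigroup d"
    using assms by (simp_all add: E_demigroup_def)
  show "CE_D x \<in> CdE E d" if "x \<in> CdE E d" for x
    using that CE_D_in_CE [OF E] by (auto simp: CdE_def)
  fix x y u assume x: "x \<in> CdE E d" and y: "y \<in> CdE E d" and u: "CE_comp x y = Some u"
  obtain e s f t where xy: "x = (e, s)" "y = (f, t)"
    by (cases x, cases y) blast
  have sf: "s * f = s" and u_eq: "u = (e, s * t)"
    using u xy by (simp_all add: CE_comp_Pair split: if_splits)
  have ds: "d e = d s" and dt: "d f = d t"
    using x y xy by (simp_all add: CdE_def)
  have "d (s * t) = d (s * f)"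
    using dm dt by (rule demigroup_d_mult_cong)
  also have "\<dots> = d e"
    using sf ds by simp
  finally have "d (s * t) = d e" .
  moreover have "u \<in> CE E"
    using x u by (auto simp: CdE_def intro: CE_comp_closed)
  ultimately show "u \<in> CdE E d"
    using u_eq by (simp add: CdE_def)
qed

theorem proposition3p1:
  fixes E :: "'a::semigroup_mult set"
  assumes "E \<noteq> {}" and "E \<subseteq> idempotents"
  shows "(\<forall>e s f t. (e, s) \<in> CE E \<longrightarrow> (f, t) \<in> CE E \<longrightarrow> s * f = s \<longrightarrow> (e, s * t) \<in> CE E)
    \<and> constellation (CE E) CE_comp CE_D
    \<and> CE_D ` CE E = {(e, e) | e. e \<in> E}
    \<and> {x \<in> CE E. right_identity (CE E) CE_comp x} = {(e, e) | e. e \<in> E}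
    \<and> (\<forall>e s f t. (e, s) \<in> CE E \<longrightarrow> (f, t) \<in> CE E \<longrightarrow>
         (natural_quasiorder CE_comp CE_D (e, s) (f, t) \<longleftrightarrow> e * f = e \<and> s = e * t))
    \<and> (\<forall>d. E_demigroup E d \<longrightarrow> subconstellation (CdE E d) (CE E) CE_comp CE_D)"
  using assms(2)
  by (simp add: CE_mult_right constellation_CE CE_D_image right_identities_CE
      natural_quasiorder_CE_iff CdE_subconstellation)

end
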